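(* Let $G$ and $H$ be finite simple graphs and $m,n$ positive integers. The direct product ${\sf M}_m(G)\times{\sf M}_n(H)$ is a cover graph if and only if $G$ or $H$ is bipartite.
   Context: A graph is a cover graph if it is the underlying (undirected) graph of the Hasse diagram of some finite partially ordered set. The direct product $G \times H$ has vertex set $V(G)\times V(H)$, with $(g_i,h_s)$ adjacent to $(g_j,h_t)$ if and only if $g_ig_j \in E(G)$ and $h_sh_t \in E(H)$. For a graph $G$ with vertex set $V_0=\{\langle 0,j\rangle : 0\le j\le N-1\}$ and edge set $E_0$, and $m>0$, the generalized Mycielskian ${\sf M}_m(G)$ has vertex set $V_0\cup V_1\cup\cdots\cup V_m\cup\{u\}$ where $V_i=\{\langle i,j\rangle: 0\le j\le N-1\}$, and edge set $E_0\cup E_1\cup\cdots\cup E_m\cup\{\langle m,j\rangle u: 0\le j\le N-1\}$, where $E_i=\{\langle i-1,j\rangle\langle i,k\rangle : \langle 0,j\rangle\langle 0,k\rangle\in E_0\}$ for $1\le i\le m$. *)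

theory Defs
  imports Main
begin

definition simple_graph :: "'a set \<Rightarrow> ('a \<Rightarrow> 'a \<Rightarrow> bool) \<Rightarrow> bool" where
  "simple_graph V E \<longleftrightarrow> finite V \<and> (\<forall>u v. E u v \<longrightarrow> u \<in> V \<and> v \<in> V)
     \<and> (\<forall>u v. E u v \<longrightarrow> E v u) \<and> (\<forall>u. \<not> E u u)"

definition bipartite :: "'a set \<Rightarrow> ('a \<Rightarrow> 'a \<Rightarrow> bool) \<Rightarrow> bool" where
  "bipartite V E \<longleftrightarrow> (\<exists>c :: 'a \<Rightarrow> bool. \<forall>u\<in>V. \<forall>v\<in>V. E u v \<longrightarrow> c u \<noteq> c v)"

definition covers :: "'a set \<Rightarrow> 'a rel \<Rightarrow> 'a \<Rightarrow> 'a \<Rightarrow> bool" where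
  "covers V r x y \<longleftrightarrow> (x, y) \<in> r \<and> x \<noteq> y \<and>
     \<not> (\<exists>w\<in>V. (x, w) \<in> r \<and> (w, y) \<in> r \<and> w \<noteq> x \<and> w \<noteq> y)"

definition cover_graph :: "'a set \<Rightarrow> ('a \<Rightarrow> 'a \<Rightarrow> bool) \<Rightarrow> bool" where
  "cover_graph V E \<longleftrightarrow> finite V \<and> (\<exists>r. partial_order_on V r \<and>
     (\<forall>u\<in>V. \<forall>v\<in>V. E u v \<longleftrightarrow> covers V r u v \<or> covers V r v u))"

definition dprod_verts :: "'a set \<Rightarrow> 'b set \<Rightarrow> ('a \<times> 'b) set" where
  "dprod_verts V W = V \<times> W"

definition dprod_edges ::
  "('a \<Rightarrow> 'a \<Rightarrow> bool) \<Rightarrow> ('b \<Rightarrow> 'b \<Rightarrow> bool) \<Rightarrow> ('a \<times> 'b) \<Rightarrow> ('a \<times> 'b) \<Rightarrow> bool" where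
  "dprod_edges E F p q \<longleftrightarrow> E (fst p) (fst q) \<and> F (snd p) (snd q)"

text \<open>Generalized Mycielskian M_m(G). Vertex \<langle>i,j\<rangle> (0 \<le> i \<le> m, j a vertex
of G) is represented as Some (j, i); the apex u is None.\<close>
definition myc_verts :: "nat \<Rightarrow> 'a set \<Rightarrow> ('a \<times> nat) option set" where
  "myc_verts m V = {Some (v, i) | v i. v \<in> V \<and> i \<le> m} \<union> {None}"

definition myc_edges :: "nat \<Rightarrow> 'a set \<Rightarrow> ('a \<Rightarrow> 'a \<Rightarrow> bool)
     \<Rightarrow> ('a \<times> nat) option \<Rightarrow> ('a \<times> nat) option \<Rightarrow> bool" where
  "myc_edges m V E x y \<longleftrightarrow>
     (\<exists>v w. x = Some (v, 0) \<and> y = Some (w, 0) \<and> E v w)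
   \<or> (\<exists>v w i. 1 \<le> i \<and> i \<le> m \<and> E v w \<and>
        ((x = Some (v, i - 1) \<and> y = Some (w, i)) \<or> (y = Some (v, i - 1) \<and> x = Some (w, i))))
   \<or> (\<exists>v. v \<in> V \<and> ((x = Some (v, m) \<and> y = None) \<or> (y = Some (v, m) \<and> x = None)))"

end

theory Submission
  imports Defs
begin

text \<open>
If G is bipartite, rank the vertices of M_m(G) by 2i on level i and 2m + 2 at the apex, lifting
one colour class of the base level to rank 1. Ordering the product by the rank of its G-coordinate,
every edge joins ranks differing by 1 or 2 and no edge spans a path of two edges, so the transitive
closure of the upward edges is an order whose Hasse diagram is exactly the product.

Conversely, orienting the edges of a Hasse diagram upwards, every closed walk of length 4 goes up
twice and down twice. If neither G nor H is bipartite, neither is K = G \<times> H, and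
M_m(G) \<times> M_n(H) contains a homomorphic image of M_k(K) for k = max m n. On M_k(K) such a
balanced orientation is the gradient of a potential on all edges off the base level (by the squares
between consecutive levels), and on base edges it deviates from that gradient by an odd amount that
depends only on the head of the edge and changes sign along edges. The sign of this deviation
would be a proper 2-colouring of K.
\<close>

lemma simple_graph_dprod:
  assumes "simple_graph V E" and "simple_graph W F"
  shows "simple_graph (dprod_verts V W) (dprod_edges E F)"
  using assms unfolding simple_graph_def dprod_verts_def dprod_edges_def by auto

lemma finite_myc_verts:
  assumes "finite V"
  shows "finite (myc_verts m V)"
proof -
  have "myc_verts m V = (\<lambda>(v, i). Some (v, i)) ` (V \<times> {..m}) \<union> {None}"
    unfolding myc_verts_def by auto
  then show ?thesis
    using assms by simp
qed

lemma myc_edgesE: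
  assumes "myc_edges m V E x y"
  obtains (base) v w where "x = Some (v, 0)" "y = Some (w, 0)" "E v w"
    | (up) v w i where "1 \<le> i" "i \<le> m" "E v w" "x = Some (v, i - 1)" "y = Some (w, i)"
    | (down) v w i where "1 \<le> i" "i \<le> m" "E v w" "y = Some (v, i - 1)" "x = Some (w, i)"
    | (to_apex) v where "v \<in> V" "x = Some (v, m)" "y = None"
    | (from_apex) v where "v \<in> V" "y = Some (v, m)" "x = None"
  using assms unfolding myc_edges_def by blast

lemma myc_edges_base: "E v w \<Longrightarrow> myc_edges m V E (Some (v, 0)) (Some (w, 0))"
  unfolding myc_edges_def by auto

lemma myc_edges_down: "E v w \<Longrightarrow> i < m \<Longrightarrow> myc_edges m V E (Some (w, Suc i)) (Some (v, i))"
  unfolding myc_edges_def by (intro disjI2 disjI1 exI[of _ v] exI[of _ w] exI[of _ "Suc i"]) auto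

lemma myc_edges_apex: "v \<in> V \<Longrightarrow> myc_edges m V E None (Some (v, m))"
  unfolding myc_edges_def by auto

lemma simple_graph_myc:
  assumes "simple_graph V E"
  shows "simple_graph (myc_verts m V) (myc_edges m V E)"
proof -
  have "x \<in> myc_verts m V \<and> y \<in> myc_verts m V \<and> myc_edges m V E y x \<and> x \<noteq> y"
    if "myc_edges m V E x y" for x y
    using that assms
    by (cases rule: myc_edgesE) (auto simp: simple_graph_def myc_verts_def myc_edges_def)
  then show ?thesis
    using assms finite_myc_verts unfolding simple_graph_def by blast
qed

section \<open>Graded cover graphs\<close>

definition cover_grading :: "('a \<Rightarrow> 'a \<Rightarrow> bool) \<Rightarrow> ('a \<Rightarrow> nat) \<Rightarrow> bool" where
  "cover_grading E \<rho> \<longleftrightarrow>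
     (\<forall>x y. E x y \<longrightarrow> \<rho> x \<noteq> \<rho> y \<and> \<rho> y \<le> \<rho> x + 2) \<and>
     (\<forall>x y z. E x z \<longrightarrow> E z y \<longrightarrow> E x y \<longrightarrow> \<rho> x < \<rho> z \<longrightarrow> \<rho> z < \<rho> y \<longrightarrow> False)"

lemma trancl_rank_less:
  fixes \<rho> :: "'a \<Rightarrow> 'b :: order"
  assumes "\<And>x y. (x, y) \<in> R \<Longrightarrow> \<rho> x < \<rho> y" and "(a, b) \<in> R\<^sup>+"
  shows "\<rho> a < \<rho> b"
  using assms(2) by induct (auto dest: assms(1) less_trans)

lemma partial_order_on_rtrancl:
  fixes \<rho> :: "'a \<Rightarrow> 'b :: order"
  assumes "\<And>x y. (x, y) \<in> R \<Longrightarrow> \<rho> x < \<rho> y"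
  shows "partial_order_on V (R\<^sup>* \<inter> V \<times> V)"
proof -
  have "a = b" if "(a, b) \<in> R\<^sup>*" "(b, a) \<in> R\<^sup>*" for a b
  proof (rule ccontr)
    assume "a \<noteq> b"
    then have "\<rho> a < \<rho> b" "\<rho> b < \<rho> a"
      using that trancl_rank_less[of R \<rho>, OF assms] by (auto dest: rtranclD)
    then show False
      by simp
  qed
  then have "antisym (R\<^sup>* \<inter> V \<times> V)"
    unfolding antisym_def by blast
  moreover have "trans (R\<^sup>* \<inter> V \<times> V)"
    unfolding trans_def by (blast intro: rtrancl_trans)
  ultimately show ?thesis
    unfolding partial_order_on_def preorder_on_def refl_on_def by blast
qed

lemma covers_rtrancl_iff:
  fixes \<rho> :: "'a \<Rightarrow> nat"
  assumes R: "R \<subseteq> V \<times> V" and rank: "\<And>x y. (x, y) \<in> R \<Longrightarrow> \<rho> x < \<rho> y \<and> \<rho> y \<le> \<rho> x + 2"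
    and no_triangle: "\<And>x y z. (x, z) \<in> R \<Longrightarrow> (z, y) \<in> R \<Longrightarrow> (x, y) \<notin> R"
    and "x \<in> V" "y \<in> V"
  shows "covers V (R\<^sup>* \<inter> V \<times> V) x y \<longleftrightarrow> (x, y) \<in> R"
proof
  assume cov: "covers V (R\<^sup>* \<inter> V \<times> V) x y"
  then have "(x, y) \<in> R\<^sup>*" "x \<noteq> y"
    by (auto simp: covers_def)
  then obtain c where xc: "(x, c) \<in> R" and cy: "(c, y) \<in> R\<^sup>*"
    by (auto elim: converse_rtranclE)
  have "c \<in> V" "c \<noteq> x"
    using xc R rank[OF xc] by auto
  then have "c = y"
    using cov xc cy \<open>x \<in> V\<close> \<open>y \<in> V\<close> unfolding covers_def by blast
  then show "(x, y) \<in> R"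
    using xc by simp
next
  assume xy: "(x, y) \<in> R"
  have gap: "(a, b) \<in> R \<or> \<rho> a + 2 \<le> \<rho> b" if "(a, b) \<in> R\<^sup>+" for a b
    using that
  proof (cases rule: tranclE)
    case (step c)
    then show ?thesis
      using trancl_rank_less[of R \<rho> a c] rank by fastforce
  qed simp
  have "w = x \<or> w = y" if "(x, w) \<in> R\<^sup>*" "(w, y) \<in> R\<^sup>*" for w
  proof (rule ccontr)
    assume "\<not> (w = x \<or> w = y)"
    then have "(x, w) \<in> R\<^sup>+" "(w, y) \<in> R\<^sup>+"
      using that by (auto simp: rtrancl_eq_or_trancl)
    then have "(x, w) \<in> R" "(w, y) \<in> R"
      using gap trancl_rank_less[of R \<rho>] rank rank[OF xy] by fastforce+
    then show False
      using no_triangle xy by blast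
  qed
  then show "covers V (R\<^sup>* \<inter> V \<times> V) x y"
    using xy rank[OF xy] \<open>x \<in> V\<close> \<open>y \<in> V\<close> unfolding covers_def by auto
qed

lemma cover_graph_if_cover_grading:
  assumes sg: "simple_graph V E" and \<rho>: "cover_grading E \<rho>"
  shows "cover_graph V E"
proof -
  define R where "R = {(x, y). E x y \<and> \<rho> x < \<rho> y}"
  have sym: "E x y \<Longrightarrow> E y x" and in_V: "E x y \<Longrightarrow> x \<in> V \<and> y \<in> V" for x y
    using sg unfolding simple_graph_def by blast+
  have R: "R \<subseteq> V \<times> V"
    using in_V unfolding R_def by auto
  have rank: "\<rho> x < \<rho> y \<and> \<rho> y \<le> \<rho> x + 2" if "(x, y) \<in> R" for x y
    using that \<rho> unfolding R_def cover_grading_def by auto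
  have no_triangle: "(x, y) \<notin> R" if "(x, z) \<in> R" "(z, y) \<in> R" for x y z
    using that \<rho> unfolding R_def cover_grading_def by auto
  have edge_iff: "E x y \<longleftrightarrow> (x, y) \<in> R \<or> (y, x) \<in> R" for x y
  proof -
    have "E x y \<Longrightarrow> \<rho> x \<noteq> \<rho> y"
      using \<rho> unfolding cover_grading_def by blast
    then show ?thesis
      using sym[of x y] sym[of y x] unfolding R_def by (auto simp: neq_iff)
  qed
  have po: "partial_order_on V (R\<^sup>* \<inter> V \<times> V)"
    by (rule partial_order_on_rtrancl[of R \<rho>]) (simp add: R_def)
  have covers_iff: "covers V (R\<^sup>* \<inter> V \<times> V) x y \<longleftrightarrow> (x, y) \<in> R"
    if "x \<in> V" "y \<in> V" for x y
    using R rank no_triangle that by (rule covers_rtrancl_iff)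
  show ?thesis
    unfolding cover_graph_def
  proof (intro conjI exI[of _ "R\<^sup>* \<inter> V \<times> V"] po ballI)
    show "finite V"
      using sg by (simp add: simple_graph_def)
    fix u v
    assume "u \<in> V" "v \<in> V"
    then show "E u v \<longleftrightarrow> covers V (R\<^sup>* \<inter> V \<times> V) u v \<or> covers V (R\<^sup>* \<inter> V \<times> V) v u"
      using edge_iff covers_iff by simp
  qed
qed

lemma cover_grading_dprod_fst:
  "cover_grading E \<rho> \<Longrightarrow> cover_grading (dprod_edges E F) (\<rho> \<circ> fst)"
  unfolding cover_grading_def dprod_edges_def by auto

lemma cover_grading_dprod_snd:
  "cover_grading F \<rho> \<Longrightarrow> cover_grading (dprod_edges E F) (\<rho> \<circ> snd)"
  unfolding cover_grading_def dprod_edges_def by auto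

definition myc_rank :: "('a \<Rightarrow> bool) \<Rightarrow> nat \<Rightarrow> ('a \<times> nat) option \<Rightarrow> nat" where
  "myc_rank c m x =
     (case x of None \<Rightarrow> 2 * m + 2 | Some (v, i) \<Rightarrow> 2 * i + (if i = 0 \<and> c v then 1 else 0))"

lemma myc_rank_eq_0: "myc_rank c m x = 0 \<Longrightarrow> \<exists>v. x = Some (v, 0) \<and> \<not> c v"
  and myc_rank_eq_1: "myc_rank c m x = 1 \<Longrightarrow> \<exists>v. x = Some (v, 0) \<and> c v"
  and myc_rank_eq_2: "myc_rank c m x = 2 \<Longrightarrow> 0 < m \<Longrightarrow> \<exists>v. x = Some (v, 1)"
  and myc_rank_odd: "odd (myc_rank c m x) \<Longrightarrow> myc_rank c m x = 1"
  by (cases x; auto simp: myc_rank_def split: if_splits)+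

lemma myc_edges_base_level_1:
  "myc_edges m V E (Some (v, 0)) (Some (w, 1)) \<Longrightarrow> E v w"
  unfolding myc_edges_def by auto

lemma cover_grading_myc:
  assumes sg: "simple_graph V E" and "bipartite V E" and m: "0 < m"
  shows "\<exists>\<rho>. cover_grading (myc_edges m V E) \<rho>"
proof -
  obtain c :: "'a \<Rightarrow> bool" where c: "\<forall>u\<in>V. \<forall>v\<in>V. E u v \<longrightarrow> c u \<noteq> c v"
    using \<open>bipartite V E\<close> unfolding bipartite_def by blast
  let ?\<rho> = "myc_rank c m"
  have step: "?\<rho> x \<noteq> ?\<rho> y \<and> ?\<rho> y \<le> ?\<rho> x + 2" if "myc_edges m V E x y" for x y
    using that
  proof (cases rule: myc_edgesE)
    case (base v w)
    then show ?thesis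
      using sg c by (auto simp: myc_rank_def simple_graph_def)
  qed (use m in \<open>auto simp: myc_rank_def\<close>)
  txt \<open>The only odd rank is 1, so such a triangle has ranks 0, 1, 2 and puts a vertex of level 1
    next to both colour classes.\<close>
  have no_triangle: False
    if "myc_edges m V E z y" "myc_edges m V E x y" "?\<rho> x < ?\<rho> z" "?\<rho> z < ?\<rho> y" for x y z
  proof -
    have rz: "?\<rho> z = ?\<rho> x + 1" and ry: "?\<rho> y = ?\<rho> x + 2"
      using step[OF that(2)] that(3,4) by auto
    have "\<not> odd (?\<rho> x)"
      using myc_rank_odd[of c m x] myc_rank_odd[of c m y] ry by auto
    then have "?\<rho> z = 1"
      using rz myc_rank_odd[of c m z] by auto
    then obtain v v' w where x: "x = Some (v, 0)" "\<not> c v" and z: "z = Some (v', 0)" "c v'"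
        and y: "y = Some (w, 1)"
      using myc_rank_eq_0[of c m x] myc_rank_eq_1[of c m z] myc_rank_eq_2[of c m y] rz ry m by auto
    have "E v w" "E v' w"
      using myc_edges_base_level_1 that(1,2) x y z by auto
    then show False
      using sg c x z unfolding simple_graph_def by metis
  qed
  have "cover_grading (myc_edges m V E) ?\<rho>"
    unfolding cover_grading_def using step no_triangle by blast
  then show ?thesis
    by blast
qed

section \<open>Balanced signings of Hasse diagrams\<close>

lemma covers_asym:
  assumes "partial_order_on V r" and "covers V r x y"
  shows "\<not> covers V r y x"
  using assms unfolding partial_order_on_def antisym_def covers_def by blast

lemma covers_chain_no_shortcut:
  assumes po: "partial_order_on V r"
    and "covers V r a b" "covers V r b c" "covers V r c d" and "b \<noteq> d"
  shows "\<not> covers V r a d \<and> \<not> covers V r d a"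
proof -
  have tr: "trans r" and an: "antisym r" and "r \<subseteq> V \<times> V"
    using po unfolding partial_order_on_def preorder_on_def refl_on_def by auto
  have "(a, b) \<in> r" "(b, d) \<in> r" "a \<noteq> b" "b \<in> V"
    using assms(2-4) tr \<open>r \<subseteq> V \<times> V\<close> unfolding covers_def trans_def by blast+
  moreover from this have "(a, d) \<in> r" "(d, a) \<notin> r"
    using tr an unfolding trans_def antisym_def by blast+
  ultimately show ?thesis
    using \<open>b \<noteq> d\<close> unfolding covers_def by blast
qed

definition balanced_signing :: "('a \<Rightarrow> 'a \<Rightarrow> bool) \<Rightarrow> ('a \<Rightarrow> 'a \<Rightarrow> int) \<Rightarrow> bool" where
  "balanced_signing E \<sigma> \<longleftrightarrow>
     (\<forall>x y. E x y \<longrightarrow> \<sigma> x y \<in> {-1, 1} \<and> \<sigma> y x = - \<sigma> x y) \<and>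
     (\<forall>a b c d. E a b \<longrightarrow> E b c \<longrightarrow> E c d \<longrightarrow> E d a \<longrightarrow> \<sigma> a b + \<sigma> b c + \<sigma> c d + \<sigma> d a = 0)"

lemma balanced_signing_antisym: "balanced_signing E \<sigma> \<Longrightarrow> E x y \<Longrightarrow> \<sigma> y x = - \<sigma> x y"
  unfolding balanced_signing_def by blast

lemma balanced_signing_odd: "balanced_signing E \<sigma> \<Longrightarrow> E x y \<Longrightarrow> odd (\<sigma> x y)"
  unfolding balanced_signing_def by fastforce

lemma balanced_signing_square:
  "balanced_signing E \<sigma> \<Longrightarrow> E a b \<Longrightarrow> E b c \<Longrightarrow> E c d \<Longrightarrow> E d a \<Longrightarrow>
    \<sigma> a b + \<sigma> b c + \<sigma> c d + \<sigma> d a = 0"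
  unfolding balanced_signing_def by blast

lemma balanced_signing_pullback:
  assumes "balanced_signing F \<sigma>" and "\<And>x y. E x y \<Longrightarrow> F (f x) (f y)"
  shows "balanced_signing E (\<lambda>x y. \<sigma> (f x) (f y))"
  using assms unfolding balanced_signing_def by blast

lemma balanced_signing_if_cover_graph:
  assumes sg: "simple_graph V E" and "cover_graph V E"
  shows "\<exists>\<sigma>. balanced_signing E \<sigma>"
proof -
  obtain r where po: "partial_order_on V r"
    and hasse: "\<forall>u\<in>V. \<forall>v\<in>V. E u v \<longleftrightarrow> covers V r u v \<or> covers V r v u"
    using assms(2) unfolding cover_graph_def by blast
  have sym: "E x y \<Longrightarrow> E y x" and in_V: "E x y \<Longrightarrow> x \<in> V \<and> y \<in> V" for x y
    using sg unfolding simple_graph_def by blast+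
  define \<sigma> where "\<sigma> x y = (if covers V r x y then 1 else -1 :: int)" for x y
  have orient: "covers V r y x \<longleftrightarrow> \<not> covers V r x y" if "E x y" for x y
    using hasse in_V[OF that] that covers_asym[OF po] by blast
  have no_shortcut: "\<not> (covers V r a b \<and> covers V r b c \<and> covers V r c d)"
    if "E d a" "b \<noteq> d" for a b c d
    using covers_chain_no_shortcut[OF po] hasse in_V[OF that(1)] that by blast
  have "\<sigma> a b + \<sigma> b c + \<sigma> c d + \<sigma> d a = 0"
    if ab: "E a b" and bc: "E b c" and cd: "E c d" and da: "E d a" for a b c d
  proof (cases "a = c \<or> b = d")
    case True
    then show ?thesis
      using orient[OF ab] orient[OF bc] orient[OF cd] orient[OF da] unfolding \<sigma>_def by auto
  next
    case False
    then have "a \<noteq> c" "c \<noteq> a" "b \<noteq> d" "d \<noteq> b"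
      by auto
    txt \<open>A nonzero sum needs three consecutive edges of the square oriented alike.\<close>
    then show ?thesis
      using orient[OF ab] orient[OF bc] orient[OF cd] orient[OF da]
        no_shortcut[OF da, of b c] no_shortcut[OF ab, of c d] no_shortcut[OF bc, of d a]
        no_shortcut[OF cd, of a b] no_shortcut[OF sym[OF ab], of d c]
        no_shortcut[OF sym[OF bc], of a d] no_shortcut[OF sym[OF cd], of b a]
        no_shortcut[OF sym[OF da], of c b]
      unfolding \<sigma>_def
      by (cases "covers V r a b"; cases "covers V r b c"; cases "covers V r c d";
          cases "covers V r d a") simp_all
  qed
  moreover have "\<sigma> x y \<in> {-1, 1} \<and> \<sigma> y x = - \<sigma> x y" if "E x y" for x y
    using orient[OF that] unfolding \<sigma>_def by auto
  ultimately show ?thesis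
    unfolding balanced_signing_def by blast
qed

section \<open>Odd closed walks\<close>

inductive walk :: "('a \<Rightarrow> 'a \<Rightarrow> bool) \<Rightarrow> 'a \<Rightarrow> 'a \<Rightarrow> nat \<Rightarrow> bool" for E where
  walk_Nil: "walk E a a 0"
| walk_snoc: "walk E a b n \<Longrightarrow> E b c \<Longrightarrow> walk E a c (Suc n)"

lemma walk_Cons: "walk E b c n \<Longrightarrow> E a b \<Longrightarrow> walk E a c (Suc n)"
  by (induct rule: walk.induct) (simp_all add: walk.walk_snoc walk_Nil[THEN walk.walk_snoc])

lemma walk_append:
  assumes "walk E a b n" and "walk E b c k"
  shows "walk E a c (n + k)"
  using assms(2,1) by (induct rule: walk.induct) (simp_all add: walk.walk_snoc)

lemma walk_reverse:
  assumes "\<And>x y. E x y \<Longrightarrow> E y x" and "walk E a b n"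
  shows "walk E b a n"
  using assms(2) by induct (simp_all add: walk_Nil walk_Cons assms(1))

lemma walk_power: "walk E a a n \<Longrightarrow> walk E a a (n * k)"
proof (induct k)
  case 0
  then show ?case
    by (simp add: walk_Nil)
next
  case (Suc k)
  then show ?case
    using walk_append[of E a a n a "n * k"] by simp
qed

lemma walk_dprod:
  "walk E a a' n \<Longrightarrow> walk F b b' n \<Longrightarrow> walk (dprod_edges E F) (a, b) (a', b') n"
proof (induct arbitrary: b' rule: walk.induct)
  case (walk_Nil a)
  then have "b' = b"
    by (cases rule: walk.cases) simp_all
  then show ?case
    by (simp add: walk.walk_Nil)
next
  case (walk_snoc a a'' n a')
  from walk_snoc.prems obtain b'' where "walk F b b'' n" "F b'' b'"
    by (cases rule: walk.cases) auto
  then show ?case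
    using walk_snoc walk.walk_snoc[of _ _ "(a'', b'')"] by (simp add: dprod_edges_def)
qed

lemma walk_alternating:
  fixes f :: "'a \<Rightarrow> 'b :: ring_1"
  assumes "walk E a b n" and "\<And>x y. E x y \<Longrightarrow> f y = - f x"
  shows "f b = (-1) ^ n * f a"
  using assms by (induct rule: walk.induct) auto

lemma not_bipartite_if_odd_closed_walk:
  assumes sg: "simple_graph V E" and "walk E a a n" and "odd n"
  shows "\<not> bipartite V E"
proof
  assume "bipartite V E"
  then obtain c :: "'a \<Rightarrow> bool" where c: "\<forall>u\<in>V. \<forall>v\<in>V. E u v \<longrightarrow> c u \<noteq> c v"
    unfolding bipartite_def by blast
  define f where "f v = (if c v then 1 else -1 :: int)" for v
  have "f y = - f x" if "E x y" for x y
    using c sg that unfolding f_def simple_graph_def by auto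
  then have "f a = (-1) ^ n * f a"
    by (rule walk_alternating[OF assms(2)])
  then have "f a = - f a"
    using \<open>odd n\<close> by simp
  then show False
    by (simp add: f_def split: if_splits)
qed

lemma odd_closed_walk_if_not_bipartite:
  assumes sg: "simple_graph V E" and "\<not> bipartite V E"
  shows "\<exists>a n. walk E a a n \<and> odd n"
proof (rule ccontr)
  assume no_odd: "\<nexists>a n. walk E a a n \<and> odd n"
  have sym: "E x y \<Longrightarrow> E y x" for x y
    using sg by (auto simp: simple_graph_def)
  txt \<open>root v represents the connected component of v.\<close>
  define root where "root v = (SOME u. \<exists>n. walk E u v n)" for v
  define c where "c v \<longleftrightarrow> (\<exists>n. walk E (root v) v n \<and> even n)" for v
  have "\<exists>n. walk E (root v) v n" for v
    unfolding root_def by (rule someI[of _ v]) (auto intro: walk.intros)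
  then have parity_walk: "\<exists>n. walk E (root v) v n \<and> (c v \<longleftrightarrow> even n)" for v
    unfolding c_def by blast
  have root_edge: "root u = root v" if "E u v" for u v
  proof -
    have "(\<exists>n. walk E x u n) \<longleftrightarrow> (\<exists>n. walk E x v n)" for x
      using walk_snoc[of E x u _ v] walk_snoc[of E x v _ u] that sym by blast
    then show ?thesis
      unfolding root_def by simp
  qed
  have "c u \<noteq> c v" if uv: "E u v" for u v
  proof
    assume "c u = c v"
    obtain n1 n2 where n1: "walk E (root u) u n1" "c u \<longleftrightarrow> even n1"
      and n2: "walk E (root u) v n2" "c v \<longleftrightarrow> even n2"
      using parity_walk[of u] parity_walk[of v] root_edge[OF uv] by auto
    have "walk E (root u) v (Suc n1)"
      using n1(1) uv by (rule walk_snoc)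
    moreover have "walk E v (root u) n2"
      using sym n2(1) by (rule walk_reverse)
    ultimately have "walk E (root u) (root u) (Suc n1 + n2)"
      by (rule walk_append)
    moreover have "odd (Suc n1 + n2)"
      using \<open>c u = c v\<close> \<open>c u \<longleftrightarrow> even n1\<close> \<open>c v \<longleftrightarrow> even n2\<close> by simp
    ultimately show False
      using no_odd by blast
  qed
  then have "bipartite V E"
    unfolding bipartite_def by blast
  then show False
    using assms(2) by blast
qed

lemma not_bipartite_dprod:
  assumes "simple_graph V E" "simple_graph W F" "\<not> bipartite V E" "\<not> bipartite W F"
  shows "\<not> bipartite (dprod_verts V W) (dprod_edges E F)"
proof -
  obtain a p where a: "walk E a a p" "odd p"
    using odd_closed_walk_if_not_bipartite assms(1,3) by blast
  obtain b q where b: "walk F b b q" "odd q"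
    using odd_closed_walk_if_not_bipartite assms(2,4) by blast
  have "walk E a a (p * q)"
    by (rule walk_power[OF a(1)])
  moreover have "walk F b b (p * q)"
    using walk_power[OF b(1), of p] by (simp add: mult.commute)
  ultimately have "walk (dprod_edges E F) (a, b) (a, b) (p * q)"
    by (rule walk_dprod)
  moreover have "odd (p * q)"
    using a(2) b(2) by simp
  ultimately show ?thesis
    using not_bipartite_if_odd_closed_walk[OF simple_graph_dprod[OF assms(1,2)]] by blast
qed

section \<open>Embedding M_k(G \<times> H) into M_m(G) \<times> M_n(H)\<close>

text \<open>The lowest k - m levels of M_k are collapsed onto level 0 by the truncated subtraction.\<close>

definition myc_map :: "('a \<Rightarrow> 'b) \<Rightarrow> nat \<Rightarrow> nat \<Rightarrow> ('a \<times> nat) option \<Rightarrow> ('b \<times> nat) option" where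
  "myc_map p k m = map_option (\<lambda>(v, i). (p v, i + m - k))"

lemma myc_edges_myc_map:
  assumes "m \<le> k" and hom: "\<And>v w. E v w \<Longrightarrow> E' (p v) (p w)"
    and sym: "\<And>v w. E' v w \<Longrightarrow> E' w v" and verts: "\<And>v. v \<in> V \<Longrightarrow> p v \<in> V'"
    and edge: "myc_edges k V E x y"
  shows "myc_edges m V' E' (myc_map p k m x) (myc_map p k m y)"
proof -
  have levels: "myc_edges m V' E' (Some (v, i - 1 + m - k)) (Some (w, i + m - k)) \<and>
      myc_edges m V' E' (Some (w, i + m - k)) (Some (v, i - 1 + m - k))"
    if "1 \<le> i" "i \<le> k" "E' v w" for i v w
  proof (cases "k < i + m")
    case True
    then have "i - 1 + m - k = (i + m - k) - 1" "1 \<le> i + m - k" "i + m - k \<le> m"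
      using that \<open>m \<le> k\<close> by auto
    then show ?thesis
      using that(3) unfolding myc_edges_def by metis
  next
    case False
    then have "i - 1 + m - k = 0" "i + m - k = 0"
      by auto
    then show ?thesis
      using that(3) sym unfolding myc_edges_def by auto
  qed
  from edge show ?thesis
  proof (cases rule: myc_edgesE)
    case (base v w)
    then show ?thesis
      using hom \<open>m \<le> k\<close> by (simp add: myc_map_def myc_edges_base)
  next
    case (up v w i)
    then show ?thesis
      using levels[of i "p v" "p w"] hom by (simp add: myc_map_def)
  next
    case (down v w i)
    then show ?thesis
      using levels[of i "p v" "p w"] hom by (simp add: myc_map_def)
  next
    case (to_apex v)
    then show ?thesis
      using verts by (simp add: myc_map_def myc_edges_def)
  next
    case (from_apex v)
    then show ?thesis
      using verts by (simp add: myc_map_def myc_edges_apex)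
  qed
qed

lemma myc_dprod_hom:
  assumes "simple_graph VG EG" "simple_graph VH EH" "m \<le> k" "n \<le> k"
    and edge: "myc_edges k (dprod_verts VG VH) (dprod_edges EG EH) x y"
  shows "dprod_edges (myc_edges m VG EG) (myc_edges n VH EH)
           (myc_map fst k m x, myc_map snd k n x) (myc_map fst k m y, myc_map snd k n y)"
proof -
  have "myc_edges m VG EG (myc_map fst k m x) (myc_map fst k m y)"
    by (rule myc_edges_myc_map[OF assms(3) _ _ _ edge])
      (use assms(1) in \<open>auto simp: dprod_edges_def dprod_verts_def simple_graph_def\<close>)
  moreover have "myc_edges n VH EH (myc_map snd k n x) (myc_map snd k n y)"
    by (rule myc_edges_myc_map[OF assms(4) _ _ _ edge])
      (use assms(2) in \<open>auto simp: dprod_edges_def dprod_verts_def simple_graph_def\<close>)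
  ultimately show ?thesis
    by (simp add: dprod_edges_def)
qed

section \<open>Balanced signings of Mycielskians\<close>

locale balanced_myc_signing =
  fixes V :: "'a set" and E :: "'a \<Rightarrow> 'a \<Rightarrow> bool" and k :: nat
    and \<sigma> :: "('a \<times> nat) option \<Rightarrow> ('a \<times> nat) option \<Rightarrow> int"
  assumes simple: "simple_graph V E" and balanced: "balanced_signing (myc_edges k V E) \<sigma>"
begin

lemmas sign_antisym = balanced_signing_antisym[OF balanced]
  and sign_odd = balanced_signing_odd[OF balanced]
  and sign_square = balanced_signing_square[OF balanced]

lemma adj_sym: "E x y \<Longrightarrow> E y x"
  and adj_in_V: "E x y \<Longrightarrow> y \<in> V"
  using simple unfolding simple_graph_def by blast+

lemma myc_adj_sym: "myc_edges k V E x y \<Longrightarrow> myc_edges k V E y x"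
  using simple_graph_myc[OF simple] unfolding simple_graph_def by blast

lemma base_edge: "E x y \<Longrightarrow> myc_edges k V E (Some (x, 0)) (Some (y, 0))"
  by (rule myc_edges_base)

lemma down_edge: "E x y \<Longrightarrow> i < k \<Longrightarrow> myc_edges k V E (Some (y, Suc i)) (Some (x, i))"
  by (rule myc_edges_down)

definition some_neighbour :: "'a \<Rightarrow> 'a" where
  "some_neighbour v = (SOME u. E u v)"

lemma some_neighbour: "E u v \<Longrightarrow> E (some_neighbour v) v"
  unfolding some_neighbour_def by (rule someI)

text \<open>potential j lives on level k - j; it is carried down from the apex along chosen neighbours.\<close>

primrec potential :: "nat \<Rightarrow> 'a \<Rightarrow> int" where
  "potential 0 v = \<sigma> None (Some (v, k))"
| "potential (Suc j) v = potential j (some_neighbour v)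
     + \<sigma> (Some (some_neighbour v, k - j)) (Some (v, k - Suc j))"

lemma potential_down:
  assumes "Suc (i + j) = k" and "E v w"
  shows "\<sigma> (Some (w, Suc i)) (Some (v, i)) = potential (Suc j) v - potential j w"
  using assms
proof (induct j arbitrary: i v w)
  case 0
  let ?u = "some_neighbour v"
  have k: "k = Suc i" and i: "i < k"
    using 0 by simp_all
  have u: "E ?u v" "E v ?u"
    using some_neighbour adj_sym 0 by blast+
  have apex: "myc_edges k V E None (Some (x, Suc i))" if "E y x" for x y
    using myc_edges_apex[OF adj_in_V[OF that], of k E] k by simp
  have "\<sigma> None (Some (w, Suc i)) + \<sigma> (Some (w, Suc i)) (Some (v, i))
      + \<sigma> (Some (v, i)) (Some (?u, Suc i)) + \<sigma> (Some (?u, Suc i)) None = 0"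
    using sign_square[OF apex[OF 0(2)] down_edge[OF 0(2) i] myc_adj_sym[OF down_edge[OF u(2) i]]
        myc_adj_sym[OF apex[OF u(2)]]] .
  moreover have "\<sigma> (Some (v, i)) (Some (?u, Suc i)) = - \<sigma> (Some (?u, Suc i)) (Some (v, i))"
    using sign_antisym[OF down_edge[OF u(2) i]] .
  moreover have "\<sigma> (Some (?u, Suc i)) None = - \<sigma> None (Some (?u, Suc i))"
    using sign_antisym[OF apex[OF u(2)]] .
  moreover have "Suc i = k" "k - Suc 0 = i"
    using k by simp_all
  ultimately show ?case
    by simp
next
  case (Suc j)
  let ?u = "some_neighbour v"
  have i: "Suc i < k" "i < k" and u: "E ?u v" "E v ?u"
    using some_neighbour adj_sym Suc.prems by auto
  have "\<sigma> (Some (w, Suc i)) (Some (v, i)) + \<sigma> (Some (v, i)) (Some (?u, Suc i))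
      + \<sigma> (Some (?u, Suc i)) (Some (v, Suc (Suc i)))
      + \<sigma> (Some (v, Suc (Suc i))) (Some (w, Suc i)) = 0"
    using sign_square[OF down_edge[OF Suc.prems(2) i(2)] myc_adj_sym[OF down_edge[OF u(2) i(2)]]
        myc_adj_sym[OF down_edge[OF u(1) i(1)]] down_edge[OF adj_sym[OF Suc.prems(2)] i(1)]] .
  moreover have "\<sigma> (Some (v, i)) (Some (?u, Suc i)) = - \<sigma> (Some (?u, Suc i)) (Some (v, i))"
    using sign_antisym[OF down_edge[OF u(2) i(2)]] .
  moreover have "\<sigma> (Some (?u, Suc i)) (Some (v, Suc (Suc i)))
      = - \<sigma> (Some (v, Suc (Suc i))) (Some (?u, Suc i))"
    using sign_antisym[OF down_edge[OF u(1) i(1)]] .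
  moreover have
    "\<sigma> (Some (v, Suc (Suc i))) (Some (?u, Suc i)) = potential (Suc j) ?u - potential j v"
    using Suc.hyps[OF _ u(1)] Suc.prems(1) by simp
  moreover have "\<sigma> (Some (v, Suc (Suc i))) (Some (w, Suc i)) = potential (Suc j) w - potential j v"
    using Suc.hyps[OF _ adj_sym[OF Suc.prems(2)]] Suc.prems(1) by simp
  moreover have "k - Suc j = Suc i" "k - Suc (Suc j) = i"
    using Suc.prems(1) by auto
  ultimately show ?case
    by simp
qed

lemma potential_parity:
  assumes "j \<le> k" and "E u v"
  shows "odd (potential j v + int j)"
  using assms
proof (induct j arbitrary: u v)
  case 0
  then show ?case
    using sign_odd myc_edges_apex[OF adj_in_V] by simp
next
  case (Suc j)
  have u: "E v (some_neighbour v)"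
    using some_neighbour adj_sym Suc.prems by blast
  have "odd (potential j (some_neighbour v) + int j)"
    using Suc.hyps[OF _ u] Suc.prems by simp
  moreover have "odd (\<sigma> (Some (some_neighbour v, k - j)) (Some (v, k - Suc j)))"
    using sign_odd down_edge[OF u, of "k - Suc j"] Suc.prems by (simp add: Suc_diff_Suc)
  ultimately show ?case
    by simp
qed

definition defect :: "'a \<Rightarrow> 'a \<Rightarrow> int" where
  "defect x y = \<sigma> (Some (x, 0)) (Some (y, 0)) - (potential k y - potential k x)"

lemma defect_antisym: "E x y \<Longrightarrow> defect y x = - defect x y"
  using sign_antisym[OF base_edge] unfolding defect_def by simp

lemma defect_odd:
  assumes "E x y"
  shows "odd (defect x y)"
proof -
  have "odd (potential k x + int k)" "odd (potential k y + int k)"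
    using potential_parity[of k y x] potential_parity[of k x y] adj_sym assms by blast+
  then show ?thesis
    using sign_odd[OF base_edge[OF assms]] unfolding defect_def by simp
qed

lemma defect_head:
  assumes "0 < k" and xy: "E x y" and zy: "E z y"
  shows "defect x y = defect z y"
proof -
  have down0: "myc_edges k V E (Some (y, Suc 0)) (Some (x, 0))" if "E x y" for x
    using down_edge[OF that assms(1)] .
  have "\<sigma> (Some (x, 0)) (Some (y, 0)) + \<sigma> (Some (y, 0)) (Some (z, 0))
      + \<sigma> (Some (z, 0)) (Some (y, Suc 0)) + \<sigma> (Some (y, Suc 0)) (Some (x, 0)) = 0"
    using sign_square[OF base_edge[OF xy] base_edge[OF adj_sym[OF zy]]
        myc_adj_sym[OF down0[OF zy]] down0[OF xy]] .
  moreover have "\<sigma> (Some (y, 0)) (Some (z, 0)) = - \<sigma> (Some (z, 0)) (Some (y, 0))"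
    using sign_antisym[OF base_edge[OF zy]] .
  moreover have "\<sigma> (Some (z, 0)) (Some (y, Suc 0)) = - \<sigma> (Some (y, Suc 0)) (Some (z, 0))"
    using sign_antisym[OF down0[OF zy]] .
  moreover have "\<sigma> (Some (y, Suc 0)) (Some (u, 0)) = potential k u - potential (k - 1) y"
    if "E u y" for u
    using potential_down[of 0 "k - 1", OF _ that] assms(1) by simp
  ultimately show ?thesis
    using xy zy unfolding defect_def by simp
qed

theorem bipartite_if_balanced:
  assumes "0 < k"
  shows "bipartite V E"
proof -
  define \<epsilon> where "\<epsilon> y = defect (SOME x. E x y) y" for y
  have \<epsilon>: "\<epsilon> y = defect x y" if "E x y" for x y
    unfolding \<epsilon>_def using defect_head[OF assms someI[of "\<lambda>x. E x y"]] that by blast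
  have "(0 < \<epsilon> u) \<noteq> (0 < \<epsilon> v)" if "E u v" for u v
  proof -
    have "\<epsilon> v = defect u v" "\<epsilon> u = - defect u v" "defect u v \<noteq> 0"
      using \<epsilon>[OF that] \<epsilon>[OF adj_sym[OF that]] defect_antisym[OF that] defect_odd[OF that]
      by fastforce+
    then show ?thesis
      by linarith
  qed
  then show ?thesis
    unfolding bipartite_def by (intro exI[of _ "\<lambda>v. 0 < \<epsilon> v"]) blast
qed

end

lemma myc_no_balanced_signing:
  assumes "simple_graph V E" and "\<not> bipartite V E" and "0 < k"
  shows "\<not> balanced_signing (myc_edges k V E) \<sigma>"
  using balanced_myc_signing.bipartite_if_balanced[of V E k \<sigma>] assms
  unfolding balanced_myc_signing_def by blast

lemma cover_graph_myc_dprod: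
  assumes "simple_graph VG EG" and "simple_graph VH EH"
    and "bipartite VG EG \<and> 0 < m \<or> bipartite VH EH \<and> 0 < n"
  shows "cover_graph (dprod_verts (myc_verts m VG) (myc_verts n VH))
           (dprod_edges (myc_edges m VG EG) (myc_edges n VH EH))"
proof -
  obtain \<rho> where "cover_grading (dprod_edges (myc_edges m VG EG) (myc_edges n VH EH)) \<rho>"
    using assms(3) cover_grading_myc[OF assms(1)] cover_grading_myc[OF assms(2)]
      cover_grading_dprod_fst cover_grading_dprod_snd by blast
  then show ?thesis
    using assms(1,2) by (intro cover_graph_if_cover_grading simple_graph_dprod simple_graph_myc)
qed

lemma not_cover_graph_myc_dprod:
  assumes G: "simple_graph VG EG" and H: "simple_graph VH EH"
    and "\<not> bipartite VG EG" and "\<not> bipartite VH EH" and "0 < m"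
  shows "\<not> cover_graph (dprod_verts (myc_verts m VG) (myc_verts n VH))
           (dprod_edges (myc_edges m VG EG) (myc_edges n VH EH))"
proof
  let ?P = "dprod_edges (myc_edges m VG EG) (myc_edges n VH EH)"
  assume "cover_graph (dprod_verts (myc_verts m VG) (myc_verts n VH)) ?P"
  then obtain \<sigma> where \<sigma>: "balanced_signing ?P \<sigma>"
    using balanced_signing_if_cover_graph
      simple_graph_dprod[OF simple_graph_myc[OF G] simple_graph_myc[OF H]] by blast
  define k where "k = max m n"
  define f :: "(('a \<times> 'b) \<times> nat) option \<Rightarrow> ('a \<times> nat) option \<times> ('b \<times> nat) option"
    where "f x = (myc_map fst k m x, myc_map snd k n x)" for x
  have "?P (f x) (f y)" if "myc_edges k (dprod_verts VG VH) (dprod_edges EG EH) x y" for x y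
    using myc_dprod_hom[OF G H _ _ that] unfolding f_def k_def by simp
  then have "balanced_signing (myc_edges k (dprod_verts VG VH) (dprod_edges EG EH))
      (\<lambda>x y. \<sigma> (f x) (f y))"
    by (rule balanced_signing_pullback[OF \<sigma>])
  moreover have "\<not> bipartite (dprod_verts VG VH) (dprod_edges EG EH)"
    using not_bipartite_dprod G H assms(3,4) by blast
  ultimately show False
    using myc_no_balanced_signing[OF simple_graph_dprod[OF G H]] \<open>0 < m\<close> unfolding k_def by simp
qed

theorem theorem13:
  fixes VG :: "'a set" and EG :: "'a \<Rightarrow> 'a \<Rightarrow> bool"
    and VH :: "'b set" and EH :: "'b \<Rightarrow> 'b \<Rightarrow> bool"
    and m n :: nat
  assumes "simple_graph VG EG" and "simple_graph VH EH"
    and "0 < m" and "0 < n"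
  shows "cover_graph (dprod_verts (myc_verts m VG) (myc_verts n VH))
           (dprod_edges (myc_edges m VG EG) (myc_edges n VH EH))
         \<longleftrightarrow> bipartite VG EG \<or> bipartite VH EH"
  using cover_graph_myc_dprod[OF assms(1,2)] not_cover_graph_myc_dprod[OF assms(1,2) _ _ assms(3)]
    assms(3,4) by blast

end
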